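(* Let $M$, $N$ and $Y$ be real normed spaces. Assume that $T\in L(M\oplus_\infty N,Y)$ and $m\in M$, $n\in N$ are such that $m+n$ lies in the unit sphere of $M\oplus_\infty N$, $\Vert n\Vert<1$ and $\Vert T(m+n)\Vert=\Vert T\Vert$. Then $\Vert T(m)\Vert=\Vert T\Vert$.
   Context: $M\oplus_\infty N$ denotes the direct sum with norm $\Vert m+n\Vert=\max\{\Vert m\Vert,\Vert n\Vert\}$. $L(X,Y)$ is the space of bounded linear operators with the operator norm. *)

theory Defs
  imports "HOL-Analysis.Analysis"
begin

text \<open>The l-infinity direct sum M (+)_inf N is modelled by the product type
  'm \<times> 'n equipped with the max norm (the library's product norm is the l2 one,
  so we use an explicit norm). The element m + n of the direct sum is the pair (m, n);
  m itself is (m, 0).\<close>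

definition inf_norm :: "'m::real_normed_vector \<times> 'n::real_normed_vector \<Rightarrow> real" where
  "inf_norm p = max (norm (fst p)) (norm (snd p))"

definition bounded_linear_inf ::
  "('m::real_normed_vector \<times> 'n::real_normed_vector \<Rightarrow> 'y::real_normed_vector) \<Rightarrow> bool" where
  "bounded_linear_inf T \<longleftrightarrow> linear T \<and> (\<exists>K. \<forall>p. norm (T p) \<le> K * inf_norm p)"

definition opnorm_inf ::
  "('m::real_normed_vector \<times> 'n::real_normed_vector \<Rightarrow> 'y::real_normed_vector) \<Rightarrow> real" where
  "opnorm_inf T = Sup {norm (T p) | p. inf_norm p \<le> 1}"

end

theory Submission
  imports Defs
begin

text \<open>Writing k = \<parallel>n\<parallel>, the point (m, n) is the convex combination
  (1 - k)(m, 0) + k (m, sgn n) of two points of the unit ball. If the norm of T at a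
  convex combination attains the bound \<parallel>T\<parallel> of both endpoints, it attains it at every
  endpoint of positive weight, in particular at (m, 0) since k < 1.\<close>

lemma inf_norm_nonneg: "0 \<le> inf_norm p"
  by (simp add: inf_norm_def le_max_iff_disj)

lemma norm_le_opnorm_inf:
  assumes "bounded_linear_inf T" and "inf_norm p \<le> 1"
  shows "norm (T p) \<le> opnorm_inf T"
proof -
  obtain K where K: "\<And>q. norm (T q) \<le> K * inf_norm q"
    using assms(1) unfolding bounded_linear_inf_def by blast
  have "norm (T q) \<le> max K 0" if "inf_norm q \<le> 1" for q
  proof -
    have "norm (T q) \<le> max K 0 * inf_norm q"
      using K[of q] mult_right_mono[OF max.cobounded1 inf_norm_nonneg] by (rule order_trans)
    also have "\<dots> \<le> max K 0"
      using that inf_norm_nonneg[of q] by (simp add: mult_left_le)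
    finally show ?thesis .
  qed
  then have "bdd_above ((\<lambda>q. norm (T q)) ` {q. inf_norm q \<le> 1})"
    by (intro bdd_aboveI2) simp
  moreover have "norm (T p) \<in> (\<lambda>q. norm (T q)) ` {q. inf_norm q \<le> 1}"
    using assms(2) by simp
  moreover have "{norm (T q) | q. inf_norm q \<le> 1} = (\<lambda>q. norm (T q)) ` {q. inf_norm q \<le> 1}"
    by blast
  ultimately show ?thesis
    unfolding opnorm_inf_def by (simp add: cSup_upper)
qed

lemma norm_convex_combination_eq_bound:
  fixes u v :: "'a::real_normed_vector"
  assumes "norm u \<le> c" and "norm v \<le> c"
    and "norm ((1 - k) *\<^sub>R u + k *\<^sub>R v) = c"
    and "0 \<le> k" and "k < 1"
  shows "norm u = c"
proof -
  have "c \<le> (1 - k) * norm u + k * norm v"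
    using assms(3-5) norm_triangle_ineq[of "(1 - k) *\<^sub>R u" "k *\<^sub>R v"] by simp
  also have "\<dots> \<le> (1 - k) * norm u + k * c"
    using assms(2,4) by (simp add: mult_left_mono)
  finally have "(1 - k) * c \<le> (1 - k) * norm u"
    by (simp add: algebra_simps)
  then show ?thesis
    using assms(1,5) by simp
qed

lemma convex_decomposition_sgn:
  fixes m :: "'m::real_normed_vector" and n :: "'n::real_normed_vector"
  shows "(m, n) = (1 - norm n) *\<^sub>R (m, 0) + norm n *\<^sub>R (m, sgn n)"
  by (cases "n = 0") (simp_all add: sgn_div_norm algebra_simps)

theorem lemma4p1:
  fixes T :: "'m::real_normed_vector \<times> 'n::real_normed_vector \<Rightarrow> 'y::real_normed_vector"
    and m :: 'm and n :: 'n
  assumes "bounded_linear_inf T"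
    and "inf_norm (m, n) = 1"
    and "norm n < 1"
    and "norm (T (m, n)) = opnorm_inf T"
  shows "norm (T (m, 0)) = opnorm_inf T"
proof -
  have "linear T"
    using assms(1) unfolding bounded_linear_inf_def by blast
  have "norm m = 1"
    using assms(2,3) unfolding inf_norm_def by (auto simp: max_def split: if_splits)
  then have "norm (T (m, 0)) \<le> opnorm_inf T" and "norm (T (m, sgn n)) \<le> opnorm_inf T"
    using assms(1) by (auto intro!: norm_le_opnorm_inf simp: inf_norm_def norm_sgn)
  moreover have "T (m, n) = T ((1 - norm n) *\<^sub>R (m, 0) + norm n *\<^sub>R (m, sgn n))"
    by (rule arg_cong[OF convex_decomposition_sgn])
  then have "T (m, n) = (1 - norm n) *\<^sub>R T (m, 0) + norm n *\<^sub>R T (m, sgn n)"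
    by (simp only: linear_add[OF \<open>linear T\<close>] linear_scale[OF \<open>linear T\<close>])
  ultimately show ?thesis
    using assms(3,4) norm_convex_combination_eq_bound[where k = "norm n"] by simp
qed

end
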